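(* Let $V(x,y)=(1-\langle x,y\rangle^2)^{1/2}$ for $x,y\in\mathbb S^{d-1}$, and consider $I_{V^s}(\mu)=\iint V(x,y)^s\,d\mu(x)d\mu(y)$ over $\mu\in\mathcal P(\mathbb S^{d-1})$. Then: (i) if $0<s<2$, $\sigma$ is a maximizer of $I_{V^s}$; (ii) if $s=2$, $\mu$ is a maximizer of $I_{V^s}$ if and only if $\mu$ is isotropic; (iii) if $s>2$, the only maximizers of $I_{V^s}$ (up to central symmetry and rotation) are the measures $\frac1d\sum_{i=1}^d\delta_{e_i}$, where $\{e_i\}_{i=1}^d$ is an orthonormal basis of $\mathbb R^d$.
   Context: $\mathbb S^{d-1}$ is the unit sphere in $\mathbb R^d$, $\mathcal P(\mathbb S^{d-1})$ the Borel probability measures on it, $\sigma$ the normalized surface measure. $\mu$ is isotropic if $\int xx^T\,d\mu(x)=\frac1dI_d$. *)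

theory Defs
  imports "HOL-Probability.Probability"
begin

text \<open>Points of the sphere S^{d-1} are vectors of type real^'n, d = CARD('n).\<close>

definition V :: "real^'n \<Rightarrow> real^'n \<Rightarrow> real" where
  "V x y = sqrt (1 - (x \<bullet> y)\<^sup>2)"

text \<open>Borel probability measures on the unit sphere (as Borel measures on R^d
  giving full mass to the sphere).\<close>
definition sphere_prob :: "(real^'n) measure \<Rightarrow> bool" where
  "sphere_prob \<mu> \<longleftrightarrow> prob_space \<mu> \<and> sets \<mu> = sets borel \<and> emeasure \<mu> (sphere 0 1) = 1"

definition I_Vs :: "real \<Rightarrow> (real^'n) measure \<Rightarrow> real" where
  "I_Vs s \<mu> = (\<integral>x. (\<integral>y. V x y powr s \<partial>\<mu>) \<partial>\<mu>)"

definition maximizer :: "real \<Rightarrow> (real^'n) measure \<Rightarrow> bool" where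
  "maximizer s \<mu> \<longleftrightarrow> sphere_prob \<mu> \<and> (\<forall>\<nu>::(real^'n) measure. sphere_prob \<nu> \<longrightarrow> I_Vs s \<nu> \<le> I_Vs s \<mu>)"

text \<open>Normalized surface measure: radial projection of the uniform probability
  measure on the open unit ball (the cone-measure description of sigma).\<close>
definition sigma_sphere :: "(real^'n) measure" where
  "sigma_sphere = distr (uniform_measure lborel (ball 0 1)) borel (\<lambda>x. x /\<^sub>R norm x)"

definition isotropic :: "(real^'n) measure \<Rightarrow> bool" where
  "isotropic \<mu> \<longleftrightarrow>
     integral\<^sup>L \<mu> (\<lambda>x. (\<chi> i j. x $ i * x $ j) :: real^'n^'n) = (1 / real CARD('n)) *\<^sub>R mat 1"

definition orthonormal_basis :: "('n \<Rightarrow> real^'n) \<Rightarrow> bool" where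
  "orthonormal_basis e \<longleftrightarrow> (\<forall>i j. e i \<bullet> e j = (if i = j then 1 else 0))"

end

theory Submission
  imports Defs
begin

text \<open>
  For 0 < s < 2 write V(x,y)^s = (1 - t^2)^(s/2) with t = x \<bullet> y and expand binomially:
  the coefficient of t^0 is 1 and all others are nonpositive. Each kernel t^(2k) is a
  finite sum of products of monomials, hence positive semidefinite, and by rotation
  invariance its potential under \<sigma> is constant; so \<sigma> minimizes its energy, and the
  nonpositive coefficients turn this into maximality of \<sigma> for V^s.

  For s = 2 the energy is 1 - \<Sum>i j. m(i,j)^2, where m is the second moment matrix, of
  trace 1; hence it is at most 1 - 1/d, with equality iff m = I/d. For s > 2 the bound
  V^s \<le> V^2 gives the same maximum, attained by the cross-polytope measures. Equality
  forces isotropy and V^s = V^2, i.e. (x \<bullet> y)^2 \<in> {0, 1}, almost everywhere; so the mass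
  lives on pairwise orthogonal antipodal pairs, each of mass 1/d by isotropy.
\<close>

section \<open>Invariance of Lebesgue measure under orthogonal maps\<close>

text \<open>The change of variables theorems of HOL-Analysis require a well-ordered index type;
  \<open>'a index\<close> is a well-ordered copy of a finite type, used to transport them.\<close>

typedef ('a::finite) index = "{..<CARD('a)} :: nat set"
  by (rule exI[of _ 0]) simp

instantiation index :: (finite) wellorder
begin

definition less_eq_index :: "'a index \<Rightarrow> 'a index \<Rightarrow> bool"
  where "x \<le> y \<longleftrightarrow> Rep_index x \<le> Rep_index y"

definition less_index :: "'a index \<Rightarrow> 'a index \<Rightarrow> bool"
  where "x < y \<longleftrightarrow> Rep_index x < Rep_index y"

instance
proof
  fix P :: "'a index \<Rightarrow> bool" and a
  assume step: "\<And>x. (\<And>y. y < x \<Longrightarrow> P y) \<Longrightarrow> P x"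
  have "\<forall>x. Rep_index x = n \<longrightarrow> P x" for n
    by (induction n rule: less_induct) (metis step less_index_def)
  then show "P a" by blast
qed (auto simp: less_eq_index_def less_index_def Rep_index_inject)

end

lemma card_UNIV_index: "card (UNIV :: 'a::finite index set) = CARD('a)"
  using type_definition.card[OF type_definition_index] by simp

instance index :: (finite) finite
proof
  have "(UNIV :: 'a index set) = Abs_index ` {..<CARD('a)}"
    using type_definition.Abs_image[OF type_definition_index[where 'a='a]] by simp
  then show "finite (UNIV :: 'a index set)" by (metis finite_imageI finite_lessThan)
qed

definition vec_reindex :: "('m \<Rightarrow> 'n) \<Rightarrow> real^'n \<Rightarrow> real^'m" where
  "vec_reindex h x = (\<chi> j. x $ h j)"

lemma vec_reindex_nth [simp]: "vec_reindex h x $ j = x $ h j"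
  by (simp add: vec_reindex_def)

lemma linear_vec_reindex: "linear (vec_reindex h)"
  by (auto simp: linear_iff vec_eq_iff)

lemma measurable_linear_cart:
  fixes f :: "real^'m \<Rightarrow> real^'n"
  shows "linear f \<Longrightarrow> f \<in> borel_measurable borel"
  by (intro borel_measurable_continuous_onI linear_continuous_on) (simp add: linear_conv_bounded_linear)

lemma inner_vec_reindex: "bij h \<Longrightarrow> vec_reindex h x \<bullet> vec_reindex h y = x \<bullet> y"
  unfolding inner_vec_def using sum.reindex_bij_betw[of h UNIV UNIV "\<lambda>i. x $ i * y $ i"] by simp

lemma vec_reindex_inv:
  assumes "bij h"
  shows "vec_reindex h (vec_reindex (inv h) x) = x" "vec_reindex (inv h) (vec_reindex h y) = y"
  using assms by (auto simp: vec_eq_iff bij_is_surj surj_f_inv_f bij_is_inj inv_f_f)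

lemma Basis_cart: "(Basis :: (real^'n) set) = range (\<lambda>i. axis i 1)"
  by (auto simp: Basis_vec_def)

lemma prod_Basis_cart: "(\<Prod>b\<in>(Basis :: (real^'n) set). f b) = (\<Prod>i\<in>UNIV. f (axis i 1))"
proof -
  have "inj (\<lambda>i::'n. axis i (1::real))" by (auto simp: inj_on_def axis_eq_axis)
  then show ?thesis unfolding Basis_cart by (simp add: prod.reindex)
qed

lemma lborel_distr_vec_reindex:
  fixes h :: "'m::finite \<Rightarrow> 'n::finite"
  assumes h: "bij h"
  shows "distr lborel borel (vec_reindex h) = (lborel :: (real^'m) measure)"
proof (rule lborel_eqI[symmetric])
  have [measurable]: "vec_reindex h \<in> borel_measurable borel"
    by (rule measurable_linear_cart[OF linear_vec_reindex])
  fix l u :: "real^'m"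
  assume lu: "\<And>b. b \<in> Basis \<Longrightarrow> l \<bullet> b \<le> u \<bullet> b"
  have le: "l $ j \<le> u $ j" for j using lu[of "axis j 1"] by (simp add: Basis_cart inner_axis)
  have "vec_reindex h -` box l u = box (vec_reindex (inv h) l) (vec_reindex (inv h) u)"
    using h by (auto simp: mem_box_cart bij_inv_eq_iff) (metis bij_inv_eq_iff h)+
  then have "emeasure (distr lborel borel (vec_reindex h)) (box l u)
      = emeasure lborel (box (vec_reindex (inv h) l) (vec_reindex (inv h) u))"
    by (subst emeasure_distr) auto
  also have "\<dots> = (\<Prod>b\<in>Basis. (vec_reindex (inv h) u - vec_reindex (inv h) l) \<bullet> b)"
    by (rule emeasure_lborel_box) (auto simp: Basis_cart inner_axis le)
  also have "\<dots> = (\<Prod>i\<in>UNIV. u $ inv h i - l $ inv h i)"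
    by (simp add: prod_Basis_cart inner_axis)
  also have "\<dots> = (\<Prod>j\<in>UNIV. u $ j - l $ j)"
    using prod.reindex_bij_betw[OF bij_betw_inv_into[OF h], of "\<lambda>j. u $ j - l $ j"] by simp
  finally show "emeasure (distr lborel borel (vec_reindex h)) (box l u) = (\<Prod>b\<in>Basis. (u - l) \<bullet> b)"
    by (simp add: prod_Basis_cart inner_axis)
qed simp

lemma lborel_distr_orthogonal_wellorder:
  fixes R :: "real^'m::{finite,wellorder} \<Rightarrow> real^'m::{finite,wellorder}"
  assumes R: "orthogonal_transformation R"
  shows "distr lborel borel R = lborel"
proof (rule lborel_eqI[symmetric])
  have [measurable]: "R \<in> borel_measurable borel"
    by (rule measurable_linear_cart[OF orthogonal_transformation_linear[OF R]])
  fix l u :: "(real, 'm) vec"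
  assume lu: "\<And>b. b \<in> Basis \<Longrightarrow> l \<bullet> b \<le> u \<bullet> b"
  have pre: "R -` box l u = inv R ` box l u"
    by (rule bij_vimage_eq_inv_image[OF orthogonal_transformation_bij[OF R]])
  have borel: "inv R ` box l u \<in> sets borel"
    using measurable_sets_borel[of R borel "box l u"] by (simp add: pre)
  have bounded: "bounded (inv R ` box l u)"
    by (intro bounded_linear_image bounded_box linear_conv_bounded_linear[THEN iffD1]
        orthogonal_transformation_linear orthogonal_transformation_inv R)
  have "emeasure (distr lborel borel R) (box l u) = emeasure lborel (inv R ` box l u)"
    by (subst emeasure_distr) (auto simp: pre)
  also have "\<dots> = measure lborel (inv R ` box l u)"
    using emeasure_bounded_finite[OF bounded] by (intro emeasure_eq_ennreal_measure) auto
  also have "measure lborel (inv R ` box l u) = measure lebesgue (inv R ` box l u)"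
    using borel by simp
  also have "\<dots> = measure lebesgue (box l u)"
    by (simp add: measure_orthogonal_image orthogonal_transformation_inv R)
  also have "\<dots> = measure lborel (box l u)"
    by simp
  also have "ennreal \<dots> = emeasure lborel (box l u)"
    using emeasure_bounded_finite[OF bounded_box[of l u]] by (intro emeasure_eq_ennreal_measure[symmetric]) simp
  finally show "emeasure (distr lborel borel R) (box l u) = (\<Prod>b\<in>Basis. (u - l) \<bullet> b)"
    using lu by simp
qed simp

lemma lborel_distr_orthogonal:
  fixes R :: "real^'n \<Rightarrow> real^'n"
  assumes R: "orthogonal_transformation R"
  shows "distr lborel borel R = lborel"
proof -
  obtain h :: "'n index \<Rightarrow> 'n" where h: "bij h"
    using finite_same_card_bij[of "UNIV :: 'n index set" "UNIV :: 'n set"] card_UNIV_index[where 'a='n]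
    by auto
  have h': "bij (inv h)" using h by (rule bij_imp_bij_inv)
  define \<Phi> where "\<Phi> = (vec_reindex h :: real^'n \<Rightarrow> real^'n index)"
  define \<Psi> where "\<Psi> = (vec_reindex (inv h) :: real^'n index \<Rightarrow> real^'n)"
  define R' where "R' = \<Phi> \<circ> R \<circ> \<Psi>"
  have linear: "linear \<Phi>" "linear R" "linear \<Psi>"
    unfolding \<Phi>_def \<Psi>_def by (simp_all add: linear_vec_reindex orthogonal_transformation_linear R)
  have "R' x \<bullet> R' y = x \<bullet> y" for x y
    using R unfolding R'_def \<Phi>_def \<Psi>_def orthogonal_transformation_def
    by (simp add: inner_vec_reindex[OF h] inner_vec_reindex[OF h'])
  then have "orthogonal_transformation R'"
    unfolding orthogonal_transformation_def R'_def using linear by (blast intro: linear_compose)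
  then have R': "distr lborel borel R' = lborel"
    by (rule lborel_distr_orthogonal_wellorder)
  have [measurable]: "R' \<in> borel_measurable borel" "R \<in> borel_measurable borel" "\<Psi> \<in> borel_measurable borel"
    using \<open>orthogonal_transformation R'\<close> linear
    by (auto intro: measurable_linear_cart orthogonal_transformation_linear)
  have \<Psi>: "distr lborel borel \<Psi> = lborel"
    unfolding \<Psi>_def by (rule lborel_distr_vec_reindex[OF h'])
  have "R \<circ> \<Psi> = \<Psi> \<circ> R'"
    using vec_reindex_inv[OF h] by (simp add: R'_def \<Phi>_def \<Psi>_def fun_eq_iff)
  then have "distr (distr lborel borel \<Psi>) borel R = distr (distr lborel borel R') borel \<Psi>"
    by (subst (1 2) distr_distr) auto
  then show ?thesis by (simp only: R' \<Psi>)
qed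

section \<open>The normalized surface measure\<close>

abbreviation unit_ball_measure :: "(real^'n) measure" where
  "unit_ball_measure \<equiv> uniform_measure lborel (ball 0 1)"

lemma unit_ball_measure_distr_orthogonal:
  fixes R :: "real^'n \<Rightarrow> real^'n"
  assumes R: "orthogonal_transformation R"
  shows "distr unit_ball_measure borel R = unit_ball_measure"
proof (rule measure_eqI)
  have [measurable]: "R \<in> borel_measurable borel"
    by (rule measurable_linear_cart[OF orthogonal_transformation_linear[OF R]])
  fix A assume "A \<in> sets (distr unit_ball_measure borel R)"
  then have [measurable]: "A \<in> sets borel" by simp
  have RA: "R -` A \<in> sets borel"
    using measurable_sets_borel[of R borel A] by simp
  have ball: "ball 0 1 \<inter> R -` A = R -` (ball 0 1 \<inter> A)"
    using orthogonal_transformation_norm[OF R] by auto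
  have "emeasure (distr unit_ball_measure borel R) A
      = emeasure lborel (R -` (ball 0 1 \<inter> A)) / emeasure lborel (ball (0::real^'n) 1)"
    by (subst emeasure_distr) (auto simp: ball RA)
  also have "emeasure lborel (R -` (ball 0 1 \<inter> A)) = emeasure lborel (ball 0 1 \<inter> A)"
    using emeasure_distr[of R lborel borel "ball 0 1 \<inter> A"] by (simp add: lborel_distr_orthogonal[OF R])
  finally show "emeasure (distr unit_ball_measure borel R) A = emeasure unit_ball_measure A"
    by simp
qed simp

lemma prob_space_unit_ball_measure: "prob_space (unit_ball_measure :: (real^'n) measure)"
proof (rule prob_space_uniform_measure)
  show "emeasure lborel (ball (0::real^'n) 1) \<noteq> 0"
    using content_ball_pos[of 1 "0::real^'n"] by (auto simp: measure_def)
  show "emeasure lborel (ball (0::real^'n) 1) \<noteq> \<infinity>"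
    using emeasure_bounded_finite[of "ball (0::real^'n) 1"] by simp
qed

lemma sphere_prob_sigma_sphere: "sphere_prob (sigma_sphere :: (real^'n) measure)"
proof -
  interpret U: prob_space "unit_ball_measure :: (real^'n) measure"
    by (rule prob_space_unit_ball_measure)
  have "emeasure (sigma_sphere :: (real^'n) measure) (sphere 0 1)
      = emeasure unit_ball_measure ((\<lambda>x::real^'n. x /\<^sub>R norm x) -` sphere 0 1 \<inter> space unit_ball_measure)"
    unfolding sigma_sphere_def by (subst emeasure_distr) (auto simp del: emeasure_uniform_measure)
  also have "(\<lambda>x::real^'n. x /\<^sub>R norm x) -` sphere 0 1 \<inter> space unit_ball_measure = space unit_ball_measure - {0}"
    by (auto simp: norm_divide)
  also have "emeasure unit_ball_measure (space unit_ball_measure - {0::real^'n}) = 1"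
  proof -
    have "emeasure (unit_ball_measure :: (real^'n) measure) {0} = 0" by simp
    moreover have "emeasure (unit_ball_measure :: (real^'n) measure) UNIV = 1"
      using U.emeasure_space_1 by (simp del: emeasure_uniform_measure)
    ultimately show ?thesis
      by (subst emeasure_compl) (auto simp del: emeasure_uniform_measure)
  qed
  finally have "emeasure (sigma_sphere :: (real^'n) measure) (sphere 0 1) = 1" .
  moreover have "prob_space (sigma_sphere :: (real^'n) measure)"
    unfolding sigma_sphere_def by (rule U.prob_space_distr) simp
  ultimately show ?thesis
    by (simp add: sphere_prob_def sigma_sphere_def)
qed

lemma sigma_sphere_distr_orthogonal:
  fixes R :: "real^'n \<Rightarrow> real^'n"
  assumes R: "orthogonal_transformation R"
  shows "distr sigma_sphere borel R = sigma_sphere"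
proof -
  have [measurable]: "R \<in> borel_measurable borel"
    by (rule measurable_linear_cart[OF orthogonal_transformation_linear[OF R]])
  have "R \<circ> (\<lambda>x. x /\<^sub>R norm x) = (\<lambda>x. x /\<^sub>R norm x) \<circ> R"
    using R by (auto simp: orthogonal_transformation_norm orthogonal_transformation_scaleR)
  then have "distr (distr unit_ball_measure borel (\<lambda>x. x /\<^sub>R norm x)) borel R
      = distr (distr unit_ball_measure borel R) borel (\<lambda>x. x /\<^sub>R norm x)"
    by (simp add: distr_distr)
  then show ?thesis
    unfolding sigma_sphere_def by (simp only: unit_ball_measure_distr_orthogonal[OF R])
qed

lemma integral_sigma_sphere_inner_eq:
  fixes a b :: "real^'n" and g :: "real \<Rightarrow> real"
  assumes "norm a = norm b" and [measurable]: "g \<in> borel_measurable borel"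
  shows "(\<integral>y. g (a \<bullet> y) \<partial>sigma_sphere) = (\<integral>y. g (b \<bullet> y) \<partial>sigma_sphere)"
proof -
  obtain R where R: "orthogonal_transformation R" and Ra: "R a = b"
    using orthogonal_transformation_exists[OF assms(1)] by blast
  have [measurable]: "R \<in> borel_measurable borel"
    by (rule measurable_linear_cart[OF orthogonal_transformation_linear[OF R]])
  have "(\<integral>y. g (a \<bullet> y) \<partial>sigma_sphere) = (\<integral>y. g (b \<bullet> R y) \<partial>sigma_sphere)"
    using R by (simp add: Ra[symmetric] orthogonal_transformation_def)
  also have "\<dots> = (\<integral>y. g (b \<bullet> y) \<partial>distr sigma_sphere borel R)"
    by (subst integral_distr) (auto simp: sigma_sphere_def)
  finally show ?thesis by (simp only: sigma_sphere_distr_orthogonal[OF R])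
qed

lemma
  assumes "sphere_prob (M :: (real^'n) measure)"
  shows prob_space_sphere_prob: "prob_space M"
    and sets_sphere_prob: "sets M = sets borel"
    and AE_norm_sphere_prob: "AE x in M. norm x = 1"
proof -
  show P: "prob_space M" and S: "sets M = sets borel"
    using assms by (auto simp: sphere_prob_def)
  interpret prob_space M by (rule P)
  have "sphere 0 1 \<in> events" using S by simp
  moreover have "prob (sphere 0 1) = 1"
    using assms by (simp add: sphere_prob_def emeasure_eq_measure)
  ultimately show "AE x in M. norm x = 1"
    by (simp add: AE_in_set_eq_1[symmetric])
qed

lemma measurable_sphere_prob:
  "sphere_prob M \<Longrightarrow> f \<in> measurable borel N \<Longrightarrow> f \<in> measurable M N"
  using measurable_cong_sets[OF sets_sphere_prob refl] by blast

lemma integrable_sphere_prob: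
  fixes f :: "real^'n \<Rightarrow> real"
  assumes M: "sphere_prob M" and f: "f \<in> borel_measurable borel"
    and bound: "\<And>x. norm x = 1 \<Longrightarrow> \<bar>f x\<bar> \<le> B"
  shows "integrable M f"
proof -
  interpret prob_space M by (rule prob_space_sphere_prob[OF M])
  show ?thesis
    using AE_norm_sphere_prob[OF M] bound measurable_sphere_prob[OF M f]
    by (intro integrable_const_bound[where B=B]) auto
qed

lemma abs_integral_sphere_prob_le:
  fixes f :: "real^'n \<Rightarrow> real"
  assumes M: "sphere_prob M" and f: "f \<in> borel_measurable borel"
    and bound: "\<And>x. norm x = 1 \<Longrightarrow> \<bar>f x\<bar> \<le> B"
  shows "\<bar>integral\<^sup>L M f\<bar> \<le> B"
proof -
  interpret prob_space M by (rule prob_space_sphere_prob[OF M])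
  have int: "integrable M f" by (rule integrable_sphere_prob[OF M f bound])
  have "AE x in M. f x \<le> B \<and> - f x \<le> B"
    using AE_norm_sphere_prob[OF M] bound by (auto simp: abs_le_iff)
  then have "integral\<^sup>L M f \<le> B" "integral\<^sup>L M (\<lambda>x. - f x) \<le> B"
    using int by (auto intro!: integral_le_const simp del: integral_minus)
  then show ?thesis by simp
qed

definition bounded_kernel :: "(real^'n \<Rightarrow> real^'n \<Rightarrow> real) \<Rightarrow> bool" where
  "bounded_kernel K \<longleftrightarrow> case_prod K \<in> borel_measurable (borel \<Otimes>\<^sub>M borel) \<and>
     (\<exists>B. \<forall>x y. norm x = 1 \<longrightarrow> norm y = 1 \<longrightarrow> \<bar>K x y\<bar> \<le> B)"

definition energy :: "(real^'n) measure \<Rightarrow> (real^'n) measure \<Rightarrow> (real^'n \<Rightarrow> real^'n \<Rightarrow> real) \<Rightarrow> real"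
  where "energy M N K = (\<integral>x. (\<integral>y. K x y \<partial>N) \<partial>M)"

lemma I_Vs_eq_energy: "I_Vs s M = energy M M (\<lambda>x y. V x y powr s)"
  by (simp add: I_Vs_def energy_def)

lemma bounded_kernelI:
  assumes "case_prod K \<in> borel_measurable (borel \<Otimes>\<^sub>M borel)"
    and "\<And>x y. norm x = 1 \<Longrightarrow> norm y = 1 \<Longrightarrow> \<bar>K x y\<bar> \<le> B"
  shows "bounded_kernel K"
  using assms unfolding bounded_kernel_def by blast

lemma bounded_kernel_measurable:
  "bounded_kernel K \<Longrightarrow> K x \<in> borel_measurable borel"
  unfolding bounded_kernel_def using measurable_Pair2[of "case_prod K" borel borel borel x] by simp

lemma bounded_kernel_potential_measurable:
  assumes N: "sphere_prob N" and K: "bounded_kernel K"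
  shows "(\<lambda>x. \<integral>y. K x y \<partial>N) \<in> borel_measurable borel"
proof -
  interpret N: prob_space N by (rule prob_space_sphere_prob[OF N])
  have "sets (borel \<Otimes>\<^sub>M N) = sets (borel \<Otimes>\<^sub>M borel)"
    using sets_sphere_prob[OF N] by (intro sets_pair_measure_cong) auto
  then have "case_prod K \<in> borel_measurable (borel \<Otimes>\<^sub>M N)"
    using K measurable_cong_sets unfolding bounded_kernel_def by blast
  then show ?thesis by (rule N.borel_measurable_lebesgue_integral)
qed

lemma integrable_kernel:
  assumes N: "sphere_prob N" and K: "bounded_kernel K" and x: "norm x = 1"
  shows "integrable N (K x)"
proof -
  obtain B where "\<And>x y. norm x = 1 \<Longrightarrow> norm y = 1 \<Longrightarrow> \<bar>K x y\<bar> \<le> B"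
    using K unfolding bounded_kernel_def by blast
  with x show ?thesis
    by (intro integrable_sphere_prob[OF N bounded_kernel_measurable[OF K]])
qed

lemma integrable_potential:
  assumes M: "sphere_prob M" and N: "sphere_prob N" and K: "bounded_kernel K"
  shows "integrable M (\<lambda>x. \<integral>y. K x y \<partial>N)"
proof -
  obtain B where "\<And>x y. norm x = 1 \<Longrightarrow> norm y = 1 \<Longrightarrow> \<bar>K x y\<bar> \<le> B"
    using K unfolding bounded_kernel_def by blast
  then have "\<bar>\<integral>y. K x y \<partial>N\<bar> \<le> B" if "norm x = 1" for x
    using that by (intro abs_integral_sphere_prob_le[OF N bounded_kernel_measurable[OF K]])
  then show ?thesis
    by (rule integrable_sphere_prob[OF M bounded_kernel_potential_measurable[OF N K]])
qed

lemma bounded_kernel_sum: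
  fixes K :: "'k \<Rightarrow> real^'n \<Rightarrow> real^'n \<Rightarrow> real"
  assumes "\<And>k. k \<in> A \<Longrightarrow> bounded_kernel (K k)"
  shows "bounded_kernel (\<lambda>x y. \<Sum>k\<in>A. K k x y)"
proof (cases "finite A")
  case True
  obtain B where B: "\<And>k x y. k \<in> A \<Longrightarrow> norm x = 1 \<Longrightarrow> norm y = 1 \<Longrightarrow> \<bar>K k x y\<bar> \<le> B k"
    using assms unfolding bounded_kernel_def by metis
  show ?thesis
  proof (rule bounded_kernelI)
    have "(\<lambda>z. \<Sum>k\<in>A. case_prod (K k) z) \<in> borel_measurable (borel \<Otimes>\<^sub>M borel)"
      using assms unfolding bounded_kernel_def by (intro borel_measurable_sum) blast
    then show "(\<lambda>(x, y). \<Sum>k\<in>A. K k x y) \<in> borel_measurable (borel \<Otimes>\<^sub>M borel)"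
      by (simp add: case_prod_beta')
    fix x y :: "real^'n" assume "norm x = 1" "norm y = 1"
    then show "\<bar>\<Sum>k\<in>A. K k x y\<bar> \<le> (\<Sum>k\<in>A. B k)"
      using B by (intro order.trans[OF sum_abs sum_mono]) auto
  qed
qed (auto intro: bounded_kernelI[where B=0])

lemma bounded_kernel_cmult:
  assumes "bounded_kernel K"
  shows "bounded_kernel (\<lambda>x y. c * K x y)"
proof -
  obtain B where "\<And>x y. norm x = 1 \<Longrightarrow> norm y = 1 \<Longrightarrow> \<bar>K x y\<bar> \<le> B"
    and [measurable]: "case_prod K \<in> borel_measurable (borel \<Otimes>\<^sub>M borel)"
    using assms unfolding bounded_kernel_def by blast
  then show ?thesis
    by (intro bounded_kernelI[where B="\<bar>c\<bar> * B"]) (auto simp: abs_mult intro: mult_left_mono)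
qed

lemma bounded_kernel_const: "bounded_kernel (\<lambda>x y. c)"
  by (rule bounded_kernelI[where B="\<bar>c\<bar>"]) simp_all

lemma bounded_kernel_add:
  "bounded_kernel K \<Longrightarrow> bounded_kernel L \<Longrightarrow> bounded_kernel (\<lambda>x y. K x y + L x y)"
  using bounded_kernel_sum[of "{True, False}" "\<lambda>b. if b then K else L"] by simp

lemma bounded_kernel_product:
  fixes f g :: "real^'n \<Rightarrow> real"
  assumes [measurable]: "f \<in> borel_measurable borel" "g \<in> borel_measurable borel"
    and "\<And>x. norm x = 1 \<Longrightarrow> \<bar>f x\<bar> \<le> 1" "\<And>x. norm x = 1 \<Longrightarrow> \<bar>g x\<bar> \<le> 1"
  shows "bounded_kernel (\<lambda>x y. f x * g y)"
  by (rule bounded_kernelI[where B=1]) (use assms(3,4) in \<open>auto simp: abs_mult intro: mult_le_one\<close>)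

lemma energy_cong:
  assumes M: "sphere_prob M" and N: "sphere_prob N"
    and K: "bounded_kernel K" and L: "bounded_kernel L"
    and eq: "\<And>x y. norm x = 1 \<Longrightarrow> norm y = 1 \<Longrightarrow> K x y = L x y"
  shows "energy M N K = energy M N L"
  unfolding energy_def
proof (rule integral_cong_AE)
  show "AE x in M. (\<integral>y. K x y \<partial>N) = (\<integral>y. L x y \<partial>N)"
    using AE_norm_sphere_prob[OF M]
  proof eventually_elim
    case (elim x)
    show ?case
      using AE_norm_sphere_prob[OF N] eq elim measurable_sphere_prob[OF N bounded_kernel_measurable]
        K L by (intro integral_cong_AE) auto
  qed
qed (use measurable_sphere_prob[OF M bounded_kernel_potential_measurable] M N K L in auto)

lemma energy_mono:
  assumes M: "sphere_prob M" and N: "sphere_prob N"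
    and K: "bounded_kernel K" and L: "bounded_kernel L"
    and le: "\<And>x y. norm x = 1 \<Longrightarrow> norm y = 1 \<Longrightarrow> K x y \<le> L x y"
  shows "energy M N K \<le> energy M N L"
  unfolding energy_def
proof (rule integral_mono_AE)
  show "AE x in M. (\<integral>y. K x y \<partial>N) \<le> (\<integral>y. L x y \<partial>N)"
    using AE_norm_sphere_prob[OF M]
  proof eventually_elim
    case (elim x)
    show ?case
      using AE_norm_sphere_prob[OF N] elim le
      by (intro integral_mono_AE integrable_kernel[OF N K] integrable_kernel[OF N L]) auto
  qed
qed (use integrable_potential M N K L in auto)

lemma energy_sum:
  fixes K :: "'k \<Rightarrow> real^'n \<Rightarrow> real^'n \<Rightarrow> real"
  assumes M: "sphere_prob M" and N: "sphere_prob N"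
    and K: "\<And>k. k \<in> A \<Longrightarrow> bounded_kernel (K k)"
  shows "energy M N (\<lambda>x y. \<Sum>k\<in>A. K k x y) = (\<Sum>k\<in>A. energy M N (K k))"
proof -
  have int: "integrable N (K k x)" if "k \<in> A" "norm x = 1" for k x
    using that by (intro integrable_kernel[OF N K])
  have "AE x in M. (\<integral>y. (\<Sum>k\<in>A. K k x y) \<partial>N) = (\<Sum>k\<in>A. \<integral>y. K k x y \<partial>N)"
    using AE_norm_sphere_prob[OF M] by eventually_elim (simp add: int)
  then have "energy M N (\<lambda>x y. \<Sum>k\<in>A. K k x y) = (\<integral>x. (\<Sum>k\<in>A. \<integral>y. K k x y \<partial>N) \<partial>M)"
    unfolding energy_def
    by (intro integral_cong_AE measurable_sphere_prob[OF M] borel_measurable_sum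
        bounded_kernel_potential_measurable[OF N] bounded_kernel_sum K)
  also have "\<dots> = (\<Sum>k\<in>A. energy M N (K k))"
    unfolding energy_def by (rule Bochner_Integration.integral_sum) (rule integrable_potential[OF M N K])
  finally show ?thesis .
qed

lemma energy_add:
  assumes "sphere_prob M" "sphere_prob N" "bounded_kernel K" "bounded_kernel L"
  shows "energy M N (\<lambda>x y. K x y + L x y) = energy M N K + energy M N L"
  using energy_sum[OF assms(1,2), of "{True, False}" "\<lambda>b. if b then K else L"] assms(3,4) by simp

lemma energy_cmult: "energy M N (\<lambda>x y. c * K x y) = c * energy M N K"
  by (simp add: energy_def)

lemma energy_product: "energy M N (\<lambda>x y. f x * g y) = integral\<^sup>L M f * integral\<^sup>L N g"
  by (simp add: energy_def)

lemma energy_const_potential: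
  assumes M: "sphere_prob M" and N: "sphere_prob N" and K: "bounded_kernel K"
    and c: "\<And>x. norm x = 1 \<Longrightarrow> (\<integral>y. K x y \<partial>N) = c"
  shows "energy M N K = c"
proof -
  interpret M: prob_space M by (rule prob_space_sphere_prob[OF M])
  have "energy M N K = (\<integral>x. c \<partial>M)" unfolding energy_def
    using AE_norm_sphere_prob[OF M] c measurable_sphere_prob[OF M bounded_kernel_potential_measurable[OF N K]]
    by (intro integral_cong_AE) auto
  then show ?thesis by (simp add: M.prob_space)
qed

lemma energy_const:
  assumes "sphere_prob M" "sphere_prob N"
  shows "energy M N (\<lambda>x y. c) = c"
  using assms by (intro energy_const_potential) (auto simp: bounded_kernel_def prob_space.prob_space prob_space_sphere_prob)

lemma tendsto_energy:
  assumes M: "sphere_prob M" and N: "sphere_prob N"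
    and K: "\<And>n. bounded_kernel (K n)" and L: "bounded_kernel L"
    and bound: "\<And>n x y. norm x = 1 \<Longrightarrow> norm y = 1 \<Longrightarrow> \<bar>K n x y\<bar> \<le> B"
    and lim: "\<And>x y. norm x = 1 \<Longrightarrow> norm y = 1 \<Longrightarrow> (\<lambda>n. K n x y) \<longlonglongrightarrow> L x y"
  shows "(\<lambda>n. energy M N (K n)) \<longlonglongrightarrow> energy M N L"
proof -
  interpret M: prob_space M by (rule prob_space_sphere_prob[OF M])
  interpret N: prob_space N by (rule prob_space_sphere_prob[OF N])
  have "(\<lambda>n. \<integral>y. K n x y \<partial>N) \<longlonglongrightarrow> (\<integral>y. L x y \<partial>N)" if x: "norm x = 1" for x
  proof (rule integral_dominated_convergence[where w="\<lambda>_. B"])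
    show "AE y in N. (\<lambda>n. K n x y) \<longlonglongrightarrow> L x y" "AE y in N. norm (K n x y) \<le> B" for n
      using AE_norm_sphere_prob[OF N] x bound lim by auto
  qed (simp_all add: measurable_sphere_prob[OF N] bounded_kernel_measurable K L)
  then have "AE x in M. (\<lambda>n. \<integral>y. K n x y \<partial>N) \<longlonglongrightarrow> (\<integral>y. L x y \<partial>N)"
    using AE_norm_sphere_prob[OF M] by auto
  moreover have "\<bar>\<integral>y. K n x y \<partial>N\<bar> \<le> B" if "norm x = 1" for n x
    using that bound by (intro abs_integral_sphere_prob_le[OF N bounded_kernel_measurable[OF K]])
  then have "AE x in M. norm (\<integral>y. K n x y \<partial>N) \<le> B" for n
    using AE_norm_sphere_prob[OF M] by auto
  ultimately show ?thesis
    unfolding energy_def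
    by (intro integral_dominated_convergence[where w="\<lambda>_. B"])
      (simp_all add: measurable_sphere_prob[OF M] bounded_kernel_potential_measurable N K L)
qed

lemma energy_eq_0_imp_AE:
  assumes M: "sphere_prob M" and K: "bounded_kernel K"
    and nonneg: "\<And>x y. norm x = 1 \<Longrightarrow> norm y = 1 \<Longrightarrow> 0 \<le> K x y" and zero: "energy M M K = 0"
  shows "AE x in M. norm x = 1 \<and> (AE y in M. K x y = 0)"
proof -
  note int = integrable_kernel[OF M K]
  have "0 \<le> (\<integral>y. K x y \<partial>M)" if "norm x = 1" for x
    using AE_norm_sphere_prob[OF M] nonneg that by (intro integral_nonneg_AE) auto
  then have "AE x in M. (\<integral>y. K x y \<partial>M) = 0"
    using zero AE_norm_sphere_prob[OF M] integrable_potential[OF M M K]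
    unfolding energy_def by (subst (asm) integral_nonneg_eq_0_iff_AE) auto
  moreover have "AE y in M. K x y = 0" if "norm x = 1" "(\<integral>y. K x y \<partial>M) = 0" for x
    using that int[OF that(1)] AE_norm_sphere_prob[OF M] nonneg
    by (subst (asm) integral_nonneg_eq_0_iff_AE) auto
  ultimately show ?thesis using AE_norm_sphere_prob[OF M] by auto
qed

section \<open>Positive semidefinite kernels and the surface measure\<close>

definition monomial :: "'n list \<Rightarrow> real^'n \<Rightarrow> real" where
  "monomial w x = prod_list (map (\<lambda>i. x $ i) w)"

lemma monomial_simps [simp]: "monomial [] x = 1" "monomial (i # w) x = x $ i * monomial w x"
  by (simp_all add: monomial_def)

lemma monomial_measurable [measurable]: "monomial w \<in> borel_measurable borel"
  by (induction w) simp_all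

lemma abs_monomial_le_1: "norm x = 1 \<Longrightarrow> \<bar>monomial w x\<bar> \<le> 1"
proof (induction w)
  case (Cons i w)
  have "\<bar>x $ i\<bar> \<le> 1" using component_le_norm_cart[of x i] Cons.prems by simp
  then show ?case using Cons by (simp add: abs_mult mult_le_one)
qed simp

lemma inner_power_eq_sum_monomials:
  fixes x y :: "real^'n"
  shows "(x \<bullet> y) ^ m = (\<Sum>w\<in>{w. length w = m}. monomial w x * monomial w y)"
proof (induction m)
  case 0
  have "{w. length w = 0} = {[] :: 'n list}" by auto
  then show ?case by simp
next
  case (Suc m)
  have lists: "{w. length w = Suc m} = (\<lambda>(i, w). i # w) ` (UNIV \<times> {w. length w = m})"
    by (auto simp: length_Suc_conv)
  have inj: "inj_on (\<lambda>(i, w). i # w) (UNIV \<times> {w :: 'n list. length w = m})"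
    by (auto simp: inj_on_def)
  have "(x \<bullet> y) ^ Suc m = (\<Sum>i\<in>UNIV. x $ i * y $ i) * (\<Sum>w | length w = m. monomial w x * monomial w y)"
    unfolding power_Suc Suc.IH by (simp only: inner_vec_def inner_real_def)
  also have "\<dots> = (\<Sum>(i, w)\<in>UNIV \<times> {w. length w = m}. monomial (i # w) x * monomial (i # w) y)"
    by (simp add: sum_product sum.cartesian_product algebra_simps)
  also have "\<dots> = (\<Sum>w | length w = Suc m. monomial w x * monomial w y)"
    unfolding lists sum.reindex[OF inj] by (simp add: case_prod_beta')
  finally show ?case .
qed

lemma energy_sum_products:
  fixes f :: "'w \<Rightarrow> real^'n \<Rightarrow> real"
  assumes M: "sphere_prob M" and N: "sphere_prob N"
    and f: "\<And>w. w \<in> W \<Longrightarrow> f w \<in> borel_measurable borel"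
    and bound: "\<And>w x. w \<in> W \<Longrightarrow> norm x = 1 \<Longrightarrow> \<bar>f w x\<bar> \<le> 1"
  shows "energy M N (\<lambda>x y. \<Sum>w\<in>W. f w x * f w y) = (\<Sum>w\<in>W. integral\<^sup>L M (f w) * integral\<^sup>L N (f w))"
  using f bound by (subst energy_sum[OF M N]) (auto intro: bounded_kernel_product simp: energy_product)

text \<open>Both the mutual energy of M and N and the energy of N equal the constant potential c,
  so 0 \<le> \<Sum>w. (\<integral>f w dM - \<integral>f w dN)^2 expands to energy M M K - c.\<close>
lemma energy_le_of_constant_potential:
  fixes K :: "real^'n \<Rightarrow> real^'n \<Rightarrow> real" and f :: "'w \<Rightarrow> real^'n \<Rightarrow> real"
  assumes M: "sphere_prob M" and N: "sphere_prob N"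
    and K: "\<And>x y. K x y = (\<Sum>w\<in>W. f w x * f w y)"
    and f: "\<And>w. w \<in> W \<Longrightarrow> f w \<in> borel_measurable borel"
    and bound: "\<And>w x. w \<in> W \<Longrightarrow> norm x = 1 \<Longrightarrow> \<bar>f w x\<bar> \<le> 1"
    and potential: "\<And>x. norm x = 1 \<Longrightarrow> (\<integral>y. K x y \<partial>N) = c"
  shows "energy N N K \<le> energy M M K"
proof -
  have K_eq: "K = (\<lambda>x y. \<Sum>w\<in>W. f w x * f w y)" by (simp add: K fun_eq_iff)
  note potential = potential[unfolded K_eq]
  note sums = energy_sum_products[where W=W and f=f, OF _ _ f bound]
  define a where "a w = integral\<^sup>L M (f w)" for w
  define b where "b w = integral\<^sup>L N (f w)" for w
  have kernel: "bounded_kernel (\<lambda>x y. \<Sum>w\<in>W. f w x * f w y)"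
    using f bound by (intro bounded_kernel_sum bounded_kernel_product) auto
  have "energy M N (\<lambda>x y. \<Sum>w\<in>W. f w x * f w y) = c"
    by (rule energy_const_potential[OF M N kernel potential])
  then have ab: "(\<Sum>w\<in>W. a w * b w) = c"
    by (simp add: a_def b_def sums[OF M N])
  have NN: "energy N N (\<lambda>x y. \<Sum>w\<in>W. f w x * f w y) = c"
    by (rule energy_const_potential[OF N N kernel potential])
  then have bb: "(\<Sum>w\<in>W. b w * b w) = c"
    by (simp add: b_def sums[OF N N])
  have "0 \<le> (\<Sum>w\<in>W. (a w - b w) * (a w - b w))"
    by (intro sum_nonneg) simp
  also have "\<dots> = (\<Sum>w\<in>W. a w * a w) - 2 * (\<Sum>w\<in>W. a w * b w) + (\<Sum>w\<in>W. b w * b w)"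
    by (simp add: algebra_simps sum.distrib sum_subtractf sum_distrib_left)
  also have "\<dots> = energy M M (\<lambda>x y. \<Sum>w\<in>W. f w x * f w y) - c"
    using ab bb sums[OF M M] by (simp add: a_def)
  finally show ?thesis using NN by (simp add: K_eq)
qed

lemma energy_sigma_sphere_le_inner_power:
  assumes M: "sphere_prob (M :: (real^'n) measure)"
  shows "energy (sigma_sphere :: (real^'n) measure) sigma_sphere (\<lambda>x y. (x \<bullet> y) ^ m)
    \<le> energy M M (\<lambda>x y. (x \<bullet> y) ^ m)"
proof (rule energy_le_of_constant_potential[OF M sphere_prob_sigma_sphere,
      where W="{w. length w = m}" and f=monomial])
  define e :: "real^'n" where "e = axis undefined 1"
  show "(\<integral>y. (x \<bullet> y) ^ m \<partial>sigma_sphere) = (\<integral>y. (e \<bullet> y) ^ m \<partial>sigma_sphere)"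
    if "norm x = 1" for x :: "real^'n"
    using that by (intro integral_sigma_sphere_inner_eq) (simp_all add: e_def)
qed (simp_all add: abs_monomial_le_1 inner_power_eq_sum_monomials)

section \<open>The binomial series of (1 - u) powr a\<close>

definition binomial_series_coeff :: "real \<Rightarrow> nat \<Rightarrow> real" where
  "binomial_series_coeff a k = (-1) ^ k * (a gchoose k)"

definition binomial_partial_sum :: "real \<Rightarrow> nat \<Rightarrow> real \<Rightarrow> real" where
  "binomial_partial_sum a N u = (\<Sum>k\<le>N. binomial_series_coeff a k * u ^ k)"

lemma binomial_series_coeff_nonpos:
  assumes a: "0 < a" "a < 1" and k: "1 \<le> k"
  shows "binomial_series_coeff a k \<le> 0"
proof -
  have "(-1) ^ Suc m * (\<Prod>i<Suc m. a - of_nat i) \<le> 0" for m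
  proof (induction m)
    case (Suc m)
    have "(-1) ^ Suc (Suc m) * (\<Prod>i<Suc (Suc m). a - of_nat i)
        = ((-1) ^ Suc m * (\<Prod>i<Suc m. a - of_nat i)) * (of_nat (Suc m) - a)"
      by (simp add: algebra_simps)
    also have "\<dots> \<le> 0" by (rule mult_nonpos_nonneg[OF Suc.IH]) (use a in simp)
    finally show ?case .
  qed (use a in simp)
  moreover obtain m where "k = Suc m" using k by (cases k) auto
  ultimately have "(-1) ^ k * (\<Prod>i<k. a - of_nat i) \<le> 0" by blast
  then show ?thesis
    unfolding binomial_series_coeff_def gbinomial_prod_rev
    by (simp add: atLeast0LessThan divide_nonpos_pos)
qed

lemma binomial_partial_sum_one_nonneg:
  assumes a: "0 < a" "a < 1"
  shows "0 \<le> binomial_partial_sum a N 1"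
proof -
  have "(-1) ^ N * (\<Prod>i<N. (a - 1) - of_nat i) \<ge> 0"
  proof (induction N)
    case (Suc N)
    have "(-1) ^ Suc N * (\<Prod>i<Suc N. (a - 1) - of_nat i)
        = ((-1) ^ N * (\<Prod>i<N. (a - 1) - of_nat i)) * (of_nat N + 1 - a)"
      by (simp add: algebra_simps)
    also have "\<dots> \<ge> 0" by (rule mult_nonneg_nonneg[OF Suc.IH]) (use a in simp)
    finally show ?case .
  qed simp
  moreover have "binomial_partial_sum a N 1 = (-1) ^ N * (a - 1 gchoose N)"
    unfolding binomial_partial_sum_def binomial_series_coeff_def
    using gbinomial_sum_lower_neg[of a N] by (simp add: mult.commute)
  ultimately show ?thesis
    unfolding gbinomial_prod_rev by (simp add: atLeast0LessThan)
qed

lemma binomial_partial_sum_Suc: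
  "binomial_partial_sum a (Suc N) u = binomial_partial_sum a N u + binomial_series_coeff a (Suc N) * u ^ Suc N"
  by (simp add: binomial_partial_sum_def)

lemma decseq_binomial_partial_sum:
  assumes a: "0 < a" "a < 1" and u: "0 \<le> u"
  shows "decseq (\<lambda>N. binomial_partial_sum a N u)"
  using binomial_series_coeff_nonpos[OF a] u
  by (intro decseq_SucI) (simp add: binomial_partial_sum_Suc mult_nonpos_nonneg)

lemma binomial_partial_sum_le_1:
  assumes a: "0 < a" "a < 1" and u: "0 \<le> u"
  shows "binomial_partial_sum a N u \<le> 1"
proof -
  have "binomial_partial_sum a N u \<le> binomial_partial_sum a 0 u"
    using decseq_binomial_partial_sum[OF assms] by (simp add: decseq_def)
  then show ?thesis by (simp add: binomial_partial_sum_def binomial_series_coeff_def)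
qed

lemma binomial_partial_sum_one_le:
  assumes a: "0 < a" "a < 1" and u: "0 \<le> u" "u \<le> 1"
  shows "binomial_partial_sum a N 1 \<le> binomial_partial_sum a N u"
  unfolding binomial_partial_sum_def
proof (rule sum_mono)
  fix k assume "k \<in> {..N}"
  show "binomial_series_coeff a k * 1 ^ k \<le> binomial_series_coeff a k * u ^ k"
  proof (cases "k = 0")
    case False
    then have "binomial_series_coeff a k \<le> 0" using binomial_series_coeff_nonpos[OF a] by simp
    moreover have "u ^ k \<le> 1" using u by (simp add: power_le_one)
    ultimately show ?thesis using mult_left_mono_neg[of "u ^ k" 1 "binomial_series_coeff a k"] by simp
  qed simp
qed

lemma binomial_partial_sum_tendsto_lt_1:
  assumes u: "0 \<le> u" "u < 1"
  shows "(\<lambda>N. binomial_partial_sum a N u) \<longlonglongrightarrow> (1 - u) powr a"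
proof -
  have "(\<lambda>k. (a gchoose k) * (- u) ^ k) sums (1 + (- u)) powr a"
    by (rule gen_binomial_real) (use u in simp)
  moreover have "(a gchoose k) * (- u) ^ k = binomial_series_coeff a k * u ^ k" for k
    unfolding binomial_series_coeff_def power_minus[of u k] by (simp only: mult_ac)
  ultimately have "(\<lambda>k. binomial_series_coeff a k * u ^ k) sums (1 - u) powr a"
    by simp
  then show ?thesis
    unfolding sums_def binomial_partial_sum_def lessThan_Suc_atMost[symmetric]
    by (rule LIMSEQ_Suc)
qed

text \<open>At u = 1 the partial sums decrease to a limit that is bounded by (1 - v) powr a
  for every v < 1, hence by 0.\<close>
lemma binomial_partial_sum_tendsto:
  assumes a: "0 < a" "a < 1" and u: "0 \<le> u" "u \<le> 1"
  shows "(\<lambda>N. binomial_partial_sum a N u) \<longlonglongrightarrow> (1 - u) powr a"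
proof (cases "u < 1")
  case False
  with u have u1: "u = 1" by simp
  obtain L where L: "(\<lambda>N. binomial_partial_sum a N 1) \<longlonglongrightarrow> L"
    using binomial_partial_sum_one_nonneg[OF a]
    by (auto intro: decseq_convergent[OF decseq_binomial_partial_sum[OF a zero_le_one], of 0])
  have "0 \<le> L"
    using binomial_partial_sum_one_nonneg[OF a] by (intro LIMSEQ_le_const[OF L]) auto
  moreover have "L \<le> 0"
  proof -
    have below: "L \<le> (1 - v) powr a" if "0 < v" "v < 1" for v
      using binomial_partial_sum_one_le[OF a] that
      by (intro LIMSEQ_le[OF L binomial_partial_sum_tendsto_lt_1]) auto
    have lim: "((\<lambda>v. (1 - v) powr a) \<longlongrightarrow> 0) (at_left (1::real))"
    proof (rule tendsto_zero_powrI)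
      show "((\<lambda>v. 1 - v) \<longlongrightarrow> (0::real)) (at_left 1)"
        by (rule tendsto_eq_intros refl)+ simp
      show "\<forall>\<^sub>F v in at_left 1. 0 \<le> 1 - (v::real)"
        by (auto simp: eventually_at_left_field intro!: exI[of _ 0])
    qed (use a in simp_all)
    have "\<forall>\<^sub>F v in at_left (1::real). 0 < v \<and> v < 1"
      by (auto simp: eventually_at_left_field intro!: exI[of _ 0])
    then have "\<forall>\<^sub>F v in at_left (1::real). L \<le> (1 - v) powr a"
      by eventually_elim (use below in auto)
    then show ?thesis by (intro tendsto_le[OF _ lim tendsto_const]) simp_all
  qed
  ultimately show ?thesis using L u1 by simp
qed (use binomial_partial_sum_tendsto_lt_1 u in simp)

lemma binomial_partial_sum_ge:
  assumes a: "0 < a" "a < 1" and u: "0 \<le> u" "u \<le> 1"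
  shows "(1 - u) powr a \<le> binomial_partial_sum a N u"
  by (rule decseq_ge[OF decseq_binomial_partial_sum[OF a u(1)] binomial_partial_sum_tendsto[OF a u]])

section \<open>The case 0 < s < 2\<close>

lemma inner_square_unit_bounds:
  fixes x y :: "real^'n"
  assumes "norm x = 1" "norm y = 1"
  shows "0 \<le> (x \<bullet> y)\<^sup>2" "(x \<bullet> y)\<^sup>2 \<le> 1"
  using Cauchy_Schwarz_ineq2[of x y] assms by (simp_all add: abs_square_le_1)

lemma V_powr_eq:
  assumes "norm x = 1" "norm y = 1"
  shows "V x y powr s = (1 - (x \<bullet> y)\<^sup>2) powr (s / 2)"
proof -
  have "0 \<le> 1 - (x \<bullet> y)\<^sup>2" using inner_square_unit_bounds[OF assms] by simp
  then show ?thesis by (simp add: V_def powr_half_sqrt[symmetric] powr_powr)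
qed

lemma V_unit_bounds: "norm x = 1 \<Longrightarrow> norm y = 1 \<Longrightarrow> 0 \<le> V x y \<and> V x y \<le> 1"
  using inner_square_unit_bounds[of x y] unfolding V_def by (auto simp: real_sqrt_le_1_iff)

lemma bounded_kernel_V_powr:
  assumes "0 \<le> s"
  shows "bounded_kernel (\<lambda>x y :: real^'n. V x y powr s)"
proof (rule bounded_kernelI[where B=1])
  fix x y :: "real^'n" assume "norm x = 1" "norm y = 1"
  then have "V x y powr s \<le> 1"
    using V_unit_bounds[of x y] assms by (intro powr_le1) auto
  then show "\<bar>V x y powr s\<bar> \<le> 1" by simp
qed (simp add: V_def)

lemma bounded_kernel_inner_power: "bounded_kernel (\<lambda>x y :: real^'n. (x \<bullet> y) ^ m)"
proof (rule bounded_kernelI[where B=1])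
  fix x y :: "real^'n" assume "norm x = 1" "norm y = 1"
  then have "\<bar>x \<bullet> y\<bar> \<le> 1" using Cauchy_Schwarz_ineq2[of x y] by simp
  then show "\<bar>(x \<bullet> y) ^ m\<bar> \<le> 1" by (simp add: power_abs power_le_one)
qed simp

lemma abs_binomial_partial_sum_le_1:
  assumes a: "0 < a" "a < 1" and u: "0 \<le> u" "u \<le> 1"
  shows "\<bar>binomial_partial_sum a N u\<bar> \<le> 1"
  using binomial_partial_sum_ge[OF assms, of N] binomial_partial_sum_le_1[OF a u(1), of N]
  by (smt (verit) powr_ge_zero)

lemma bounded_kernel_binomial_partial_sum:
  assumes a: "0 < a" "a < 1"
  shows "bounded_kernel (\<lambda>x y :: real^'n. binomial_partial_sum a N ((x \<bullet> y)\<^sup>2))"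
proof (rule bounded_kernelI[where B=1])
  fix x y :: "real^'n" assume "norm x = 1" "norm y = 1"
  then show "\<bar>binomial_partial_sum a N ((x \<bullet> y)\<^sup>2)\<bar> \<le> 1"
    by (intro abs_binomial_partial_sum_le_1[OF a] inner_square_unit_bounds)
qed (simp add: binomial_partial_sum_def)

lemma energy_binomial_partial_sum:
  assumes M: "sphere_prob M" and N: "sphere_prob N"
  shows "energy M N (\<lambda>x y. binomial_partial_sum a K ((x \<bullet> y)\<^sup>2))
    = (\<Sum>k\<le>K. binomial_series_coeff a k * energy M N (\<lambda>x y. (x \<bullet> y) ^ (2 * k)))"
  unfolding binomial_partial_sum_def power_mult[symmetric] energy_cmult[symmetric]
  by (rule energy_sum[OF M N]) (intro bounded_kernel_cmult bounded_kernel_inner_power)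

lemma energy_binomial_partial_sum_le_sigma_sphere:
  assumes a: "0 < a" "a < 1" and M: "sphere_prob (M :: (real^'n) measure)"
  shows "energy M M (\<lambda>x y. binomial_partial_sum a K ((x \<bullet> y)\<^sup>2))
    \<le> energy (sigma_sphere :: (real^'n) measure) sigma_sphere (\<lambda>x y. binomial_partial_sum a K ((x \<bullet> y)\<^sup>2))"
  unfolding energy_binomial_partial_sum[OF M M] energy_binomial_partial_sum[OF sphere_prob_sigma_sphere sphere_prob_sigma_sphere]
proof (rule sum_mono)
  fix k
  show "binomial_series_coeff a k * energy M M (\<lambda>x y. (x \<bullet> y) ^ (2 * k))
      \<le> binomial_series_coeff a k * energy (sigma_sphere :: (real^'n) measure) sigma_sphere (\<lambda>x y. (x \<bullet> y) ^ (2 * k))"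
  proof (cases "k = 0")
    case True
    then show ?thesis by (simp add: energy_const[OF M M] energy_const[OF sphere_prob_sigma_sphere sphere_prob_sigma_sphere])
  next
    case False
    then have "binomial_series_coeff a k \<le> 0" using binomial_series_coeff_nonpos[OF a] by simp
    then show ?thesis
      by (intro mult_left_mono_neg energy_sigma_sphere_le_inner_power[OF M])
  qed
qed

theorem I_Vs_le_sigma_sphere:
  assumes s: "0 < s" "s < 2" and M: "sphere_prob (M :: (real^'n) measure)"
  shows "I_Vs s M \<le> I_Vs s (sigma_sphere :: (real^'n) measure)"
proof -
  define a where "a = s / 2"
  have a: "0 < a" "a < 1" using s by (auto simp: a_def)
  let ?\<sigma> = "sigma_sphere :: (real^'n) measure"
  let ?S = "\<lambda>K x y. binomial_partial_sum a K ((x \<bullet> y)\<^sup>2)"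
  note \<sigma> = sphere_prob_sigma_sphere[where 'n='n]
  have V: "V x y powr s = (1 - (x \<bullet> y)\<^sup>2) powr a" if "norm x = 1" "norm y = 1" for x y :: "real^'n"
    unfolding a_def by (rule V_powr_eq[OF that])
  have "I_Vs s M \<le> energy M M (?S K)" for K
    unfolding I_Vs_eq_energy
  proof (rule energy_mono[OF M M bounded_kernel_V_powr bounded_kernel_binomial_partial_sum[OF a]])
    fix x y :: "real^'n" assume "norm x = 1" "norm y = 1"
    then show "V x y powr s \<le> ?S K x y"
      unfolding V[OF \<open>norm x = 1\<close> \<open>norm y = 1\<close>]
      by (intro binomial_partial_sum_ge[OF a] inner_square_unit_bounds)
  qed (use s in simp)
  then have "I_Vs s M \<le> energy ?\<sigma> ?\<sigma> (?S K)" for K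
    by (rule order_trans[OF _ energy_binomial_partial_sum_le_sigma_sphere[OF a M]])
  moreover have "(\<lambda>K. energy ?\<sigma> ?\<sigma> (?S K)) \<longlonglongrightarrow> I_Vs s ?\<sigma>"
    unfolding I_Vs_eq_energy
  proof (rule tendsto_energy[OF \<sigma> \<sigma> bounded_kernel_binomial_partial_sum[OF a] bounded_kernel_V_powr])
    fix x y :: "real^'n" assume "norm x = 1" "norm y = 1"
    then show "\<bar>?S K x y\<bar> \<le> 1" for K
      by (intro abs_binomial_partial_sum_le_1[OF a] inner_square_unit_bounds)
    show "(\<lambda>K. ?S K x y) \<longlonglongrightarrow> V x y powr s"
      unfolding V[OF \<open>norm x = 1\<close> \<open>norm y = 1\<close>]
      by (intro binomial_partial_sum_tendsto[OF a] inner_square_unit_bounds \<open>norm x = 1\<close> \<open>norm y = 1\<close>)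
  qed (use s in simp)
  ultimately show ?thesis
    by (intro LIMSEQ_le_const[of _ "I_Vs s ?\<sigma>"]) auto
qed

section \<open>The case s = 2: second moments\<close>

definition second_moment :: "(real^'n) measure \<Rightarrow> 'n \<Rightarrow> 'n \<Rightarrow> real" where
  "second_moment M i j = (\<integral>x. x $ i * x $ j \<partial>M)"

lemma abs_coord_product_le_1:
  fixes x :: "real^'n"
  shows "norm x = 1 \<Longrightarrow> \<bar>x $ i * x $ j\<bar> \<le> 1"
  using component_le_norm_cart[of x i] component_le_norm_cart[of x j]
  unfolding abs_mult by (intro mult_le_one) auto

lemma integrable_coord_product: "sphere_prob M \<Longrightarrow> integrable M (\<lambda>x :: real^'n. x $ i * x $ j)"
  by (rule integrable_sphere_prob[OF _ _ abs_coord_product_le_1]) simp_all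

lemma integral_outer_product:
  assumes M: "sphere_prob (M :: (real^'n) measure)"
  shows "integral\<^sup>L M (\<lambda>x. (\<chi> i j. x $ i * x $ j) :: real^'n^'n) = (\<chi> i j. second_moment M i j)"
proof -
  have expand: "(\<chi> i j. g i j) = (\<Sum>i\<in>UNIV. \<Sum>j\<in>UNIV. g i j *\<^sub>R axis i (axis j 1))"
    for g :: "'n \<Rightarrow> 'n \<Rightarrow> real"
    by (simp add: vec_eq_iff axis_def if_distrib[of "\<lambda>v. v $ _"] if_distrib[of "(*) _"] sum.If_cases
        cong: if_cong)
  show ?thesis
    unfolding expand using integrable_coord_product[OF M] by (simp add: second_moment_def)
qed

lemma isotropic_iff_second_moment:
  assumes M: "sphere_prob (M :: (real^'n) measure)"
  shows "isotropic M \<longleftrightarrow> (\<forall>i j. second_moment M i j = (if i = j then 1 / real CARD('n) else 0))"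
  by (auto simp: isotropic_def integral_outer_product[OF M] vec_eq_iff mat_def)

lemma sum_second_moment_diag:
  assumes M: "sphere_prob (M :: (real^'n) measure)"
  shows "(\<Sum>i\<in>UNIV. second_moment M i i) = 1"
proof -
  interpret prob_space M by (rule prob_space_sphere_prob[OF M])
  have "(\<Sum>i\<in>UNIV. second_moment M i i) = (\<integral>x. x \<bullet> x \<partial>M)"
    using integrable_coord_product[OF M]
    by (simp add: second_moment_def inner_vec_def Bochner_Integration.integral_sum)
  also have "\<dots> = (\<integral>x. 1 \<partial>M)"
  proof (rule integral_cong_AE)
    show "(\<lambda>x. x \<bullet> x) \<in> borel_measurable M"
      by (rule measurable_sphere_prob[OF M]) simp
    show "AE x in M. x \<bullet> x = 1"
      using AE_norm_sphere_prob[OF M] by (auto simp: norm_eq_1)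
  qed simp
  finally show ?thesis by (simp add: prob_space)
qed

lemma inner_square_eq_sum:
  fixes x y :: "real^'n"
  shows "(x \<bullet> y)\<^sup>2 = (\<Sum>i\<in>UNIV. \<Sum>j\<in>UNIV. (x $ i * x $ j) * (y $ i * y $ j))"
  unfolding power2_eq_square inner_vec_def inner_real_def sum_product
  by (simp add: algebra_simps)

lemma integral_inner_square:
  assumes M: "sphere_prob (M :: (real^'n) measure)"
  shows "(\<integral>y. (x \<bullet> y)\<^sup>2 \<partial>M) = (\<Sum>i\<in>UNIV. \<Sum>j\<in>UNIV. (x $ i * x $ j) * second_moment M i j)"
  using integrable_coord_product[OF M]
  by (simp add: inner_square_eq_sum second_moment_def Bochner_Integration.integral_sum integrable_sum)

lemma energy_inner_square:
  assumes M: "sphere_prob (M :: (real^'n) measure)"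
  shows "energy M M (\<lambda>x y. (x \<bullet> y)\<^sup>2) = (\<Sum>i\<in>UNIV. \<Sum>j\<in>UNIV. (second_moment M i j)\<^sup>2)"
proof -
  have "energy M M (\<lambda>x y. (x \<bullet> y)\<^sup>2)
      = (\<integral>x. (\<Sum>i\<in>UNIV. \<Sum>j\<in>UNIV. (x $ i * x $ j) * second_moment M i j) \<partial>M)"
    by (simp only: energy_def integral_inner_square[OF M])
  also have "\<dots> = (\<Sum>i\<in>UNIV. \<Sum>j\<in>UNIV. second_moment M i j * second_moment M i j)"
    using integrable_coord_product[OF M]
    by (simp add: Bochner_Integration.integral_sum integrable_sum second_moment_def)
  finally show ?thesis by (simp add: power2_eq_square)
qed

lemma I_Vs_2_eq:
  assumes M: "sphere_prob (M :: (real^'n) measure)"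
  shows "I_Vs 2 M = 1 - energy M M (\<lambda>x y. (x \<bullet> y)\<^sup>2)"
proof -
  have kernel: "bounded_kernel (\<lambda>x y :: real^'n. (- 1) * (x \<bullet> y)\<^sup>2)"
    by (intro bounded_kernel_cmult bounded_kernel_inner_power)
  have "I_Vs 2 M = energy M M (\<lambda>x y. 1 + (- 1) * (x \<bullet> y)\<^sup>2)"
    unfolding I_Vs_eq_energy
  proof (rule energy_cong[OF M M bounded_kernel_V_powr bounded_kernel_add[OF bounded_kernel_const kernel]])
    fix x y :: "real^'n" assume "norm x = 1" "norm y = 1"
    then show "V x y powr 2 = 1 + (- 1) * (x \<bullet> y)\<^sup>2"
      using inner_square_unit_bounds[of x y] by (simp add: V_powr_eq)
  qed simp
  also have "\<dots> = energy M M (\<lambda>x y. 1) + energy M M (\<lambda>x y. (- 1) * (x \<bullet> y)\<^sup>2)"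
    by (rule energy_add[OF M M bounded_kernel_const kernel])
  also have "\<dots> = 1 - energy M M (\<lambda>x y. (x \<bullet> y)\<^sup>2)"
    using energy_cmult[of M M "- 1" "\<lambda>x y. (x \<bullet> y)\<^sup>2"] by (simp add: energy_const[OF M M])
  finally show ?thesis .
qed

definition isotropy_defect :: "(real^'n) measure \<Rightarrow> real" where
  "isotropy_defect M =
     (\<Sum>i\<in>UNIV. \<Sum>j\<in>UNIV. (second_moment M i j - (if i = j then 1 / real CARD('n) else 0))\<^sup>2)"

lemma sum_square_eq_trace_one:
  fixes m :: "'n::finite \<Rightarrow> 'n \<Rightarrow> real"
  assumes trace: "(\<Sum>i\<in>UNIV. m i i) = 1"
  shows "(\<Sum>i\<in>UNIV. \<Sum>j\<in>UNIV. (m i j)\<^sup>2)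
    = 1 / real CARD('n) + (\<Sum>i\<in>UNIV. \<Sum>j\<in>UNIV. (m i j - (if i = j then 1 / real CARD('n) else 0))\<^sup>2)"
proof -
  define c where "c = 1 / real CARD('n)"
  have "(m i j - (if i = j then c else 0))\<^sup>2 = (m i j)\<^sup>2 - (if i = j then 2 * c * m i j - c\<^sup>2 else 0)"
    for i j by (simp add: power2_eq_square algebra_simps)
  then have "(\<Sum>i\<in>UNIV. \<Sum>j\<in>UNIV. (m i j - (if i = j then c else 0))\<^sup>2)
      = (\<Sum>i\<in>UNIV. \<Sum>j\<in>UNIV. (m i j)\<^sup>2) - (\<Sum>i\<in>UNIV. 2 * c * m i i - c\<^sup>2)"
    by (simp add: sum_subtractf)
  also have "(\<Sum>i\<in>UNIV. 2 * c * m i i - c\<^sup>2) = 2 * c * (\<Sum>i\<in>UNIV. m i i) - real CARD('n) * c\<^sup>2"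
    by (simp add: sum_subtractf sum_distrib_left)
  also have "\<dots> = c"
    using trace by (simp add: c_def power2_eq_square)
  finally show ?thesis unfolding c_def[symmetric] by linarith
qed

lemma I_Vs_2_eq_isotropy_defect:
  assumes M: "sphere_prob (M :: (real^'n) measure)"
  shows "I_Vs 2 M = 1 - 1 / real CARD('n) - isotropy_defect M"
  using sum_square_eq_trace_one[of "second_moment M", OF sum_second_moment_diag[OF M]]
  by (simp add: I_Vs_2_eq[OF M] energy_inner_square[OF M] isotropy_defect_def)

lemma isotropy_defect_nonneg: "0 \<le> isotropy_defect M"
  unfolding isotropy_defect_def by (intro sum_nonneg) simp

lemma isotropy_defect_eq_0_iff:
  assumes "sphere_prob M"
  shows "isotropy_defect M = 0 \<longleftrightarrow> isotropic M"
  using isotropic_iff_second_moment[OF assms]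
  by (simp add: isotropy_defect_def sum_nonneg_eq_0_iff sum_nonneg)

section \<open>The case s > 2: cross-polytope measures\<close>

text \<open>Mass 1/d on each antipodal pair {e i, - e i}, split arbitrarily between its two points:
  the measures (1/d) \<Sum>i. \<delta>(e i) up to central symmetry.\<close>
definition cross_polytope_measure :: "(real^'n) measure \<Rightarrow> bool" where
  "cross_polytope_measure \<mu> \<longleftrightarrow> sphere_prob \<mu> \<and>
     (\<exists>e. orthonormal_basis e \<and> emeasure \<mu> (\<Union>i. {e i, - e i}) = 1 \<and>
          (\<forall>i. measure \<mu> {e i, - e i} = 1 / real CARD('n)))"

lemma inner_square_eq_1_iff:
  fixes x y :: "real^'n"
  assumes x: "norm x = 1" and y: "norm y = 1"
  shows "(x \<bullet> y)\<^sup>2 = 1 \<longleftrightarrow> y = x \<or> y = - x"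
proof
  assume sq: "(x \<bullet> y)\<^sup>2 = 1"
  define c where "c = x \<bullet> y"
  have "(y - c *\<^sub>R x) \<bullet> (y - c *\<^sub>R x) = y \<bullet> y - 2 * c * (x \<bullet> y) + c\<^sup>2 * (x \<bullet> x)"
    by (simp add: inner_diff_left inner_diff_right inner_commute power2_eq_square algebra_simps)
  also have "\<dots> = 0" using x y sq by (simp add: c_def power2_eq_square norm_eq_1)
  finally have "y = c *\<^sub>R x" by simp
  moreover have "c = 1 \<or> c = -1" using sq by (simp add: c_def power2_eq_1_iff)
  ultimately show "y = x \<or> y = - x" by auto
qed (use x in \<open>auto simp: norm_eq_1\<close>)

lemma integral_inner_square_eq_measure:
  assumes M: "sphere_prob (M :: (real^'n) measure)" and x: "norm x = 1"
    and AE: "AE y in M. (x \<bullet> y)\<^sup>2 = 0 \<or> (x \<bullet> y)\<^sup>2 = 1"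
  shows "(\<integral>y. (x \<bullet> y)\<^sup>2 \<partial>M) = measure M {x, - x}"
proof -
  interpret prob_space M by (rule prob_space_sphere_prob[OF M])
  have [measurable]: "{x, - x} \<in> sets M" by (simp add: sets_sphere_prob[OF M])
  have "AE y in M. (x \<bullet> y)\<^sup>2 = indicator {x, - x} y"
    using AE AE_norm_sphere_prob[OF M]
  proof eventually_elim
    case (elim y)
    have "x \<bullet> x \<noteq> 0" using x by (simp add: norm_eq_1)
    then show ?case
      using elim inner_square_eq_1_iff[OF x, of y] by (auto simp: indicator_def)
  qed
  then have "(\<integral>y. (x \<bullet> y)\<^sup>2 \<partial>M) = (\<integral>y. indicator {x, - x} y \<partial>M)"
    by (intro integral_cong_AE) (simp_all add: measurable_sphere_prob[OF M])
  then show ?thesis by simp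
qed

lemma V_powr_of_inner_square_01:
  assumes "0 < s" "(x \<bullet> y)\<^sup>2 = 0 \<or> (x \<bullet> y)\<^sup>2 = 1"
  shows "V x y powr s = 1 - (x \<bullet> y)\<^sup>2"
  using assms by (auto simp: V_def)

lemma I_Vs_cross_polytope:
  assumes \<mu>: "cross_polytope_measure (\<mu> :: (real^'n) measure)" and s: "0 < s"
  shows "I_Vs s \<mu> = 1 - 1 / real CARD('n)"
proof -
  obtain e where M: "sphere_prob \<mu>" and e: "orthonormal_basis e"
    and F: "emeasure \<mu> (\<Union>i. {e i, - e i}) = 1" and mass: "\<And>i. measure \<mu> {e i, - e i} = 1 / real CARD('n)"
    using \<mu> unfolding cross_polytope_measure_def by blast
  interpret prob_space \<mu> by (rule prob_space_sphere_prob[OF M])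
  define F where "F = (\<Union>i. {e i, - e i})"
  have ee: "e i \<bullet> e j = (if i = j then 1 else 0)" for i j
    using e by (simp add: orthonormal_basis_def)
  have "F \<in> events" by (simp add: F_def sets_sphere_prob[OF M])
  moreover have "prob F = 1" using F by (simp add: F_def emeasure_eq_measure)
  ultimately have AE_F: "AE y in \<mu>. y \<in> F"
    by (simp only: AE_in_set_eq_1)
  have unit: "norm x = 1" if "x \<in> F" for x
    using that ee by (auto simp: F_def norm_eq_1)
  have square_01: "(x \<bullet> y)\<^sup>2 = 0 \<or> (x \<bullet> y)\<^sup>2 = 1" if "x \<in> F" "y \<in> F" for x y
    using that ee by (auto simp: F_def)
  have potential: "(\<integral>y. V x y powr s \<partial>\<mu>) = 1 - 1 / real CARD('n)" if x: "x \<in> F" for x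
  proof -
    obtain i where "{x, - x} = {e i, - e i}" using x by (auto simp: F_def insert_commute)
    have AE_01: "AE y in \<mu>. (x \<bullet> y)\<^sup>2 = 0 \<or> (x \<bullet> y)\<^sup>2 = 1"
      using AE_F square_01[OF x] by auto
    have "(\<integral>y. V x y powr s \<partial>\<mu>) = (\<integral>y. 1 - (x \<bullet> y)\<^sup>2 \<partial>\<mu>)"
      using AE_01 V_powr_of_inner_square_01[OF s]
      by (intro integral_cong_AE) (auto simp: measurable_sphere_prob[OF M] V_def)
    also have "\<dots> = 1 - measure \<mu> {x, - x}"
      using integrable_kernel[OF M bounded_kernel_inner_power unit[OF x], of 2]
      by (simp add: integral_inner_square_eq_measure[OF M unit[OF x] AE_01] prob_space)
    finally show ?thesis using mass \<open>{x, - x} = {e i, - e i}\<close> by simp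
  qed
  have "I_Vs s \<mu> = (\<integral>x. 1 - 1 / real CARD('n) \<partial>\<mu>)"
    unfolding I_Vs_def using AE_F potential
    by (intro integral_cong_AE measurable_sphere_prob[OF M] bounded_kernel_potential_measurable[OF M]
        bounded_kernel_V_powr) (use s in auto)
  then show ?thesis by (simp add: prob_space)
qed

lemma cross_polytope_measure_exists: "\<exists>\<mu> :: (real^'n) measure. cross_polytope_measure \<mu>"
proof
  define \<mu> :: "(real^'n) measure" where
    "\<mu> = distr (measure_pmf (pmf_of_set UNIV)) borel (\<lambda>i. axis i 1)"
  interpret prob_space \<mu>
    unfolding \<mu>_def by (rule measure_pmf.prob_space_distr) simp
  have measure: "prob A = card {i. axis i 1 \<in> A} / CARD('n)" if "A \<in> sets borel" for A
    using that by (simp add: \<mu>_def measure_distr measure_pmf_of_set vimage_def)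
  have "prob (sphere 0 1) = 1"
    by (simp add: measure)
  moreover have "sets \<mu> = sets borel" by (simp add: \<mu>_def)
  ultimately have M: "sphere_prob \<mu>"
    by (simp add: sphere_prob_def emeasure_eq_measure prob_space_axioms)
  have union: "{j. axis j 1 \<in> (\<Union>i. {axis i 1, - axis i (1::real)})} = UNIV"
    by auto
  have "prob (\<Union>i. {axis i 1, - axis i 1}) = 1"
    by (subst measure) (simp add: finite_imp_closed borel_closed, simp only: union, simp)
  moreover have "prob {axis i 1, - axis i 1} = 1 / real CARD('n)" for i
  proof -
    have "axis j 1 \<noteq> - axis i (1::real)" for j
      by (auto simp: vec_eq_iff axis_def dest: spec[of _ i])
    then have "{j. axis j 1 \<in> {axis i 1, - axis i (1::real)}} = {i}"
      by (auto simp: axis_eq_axis)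
    then show ?thesis by (subst measure) simp_all
  qed
  moreover have "orthonormal_basis (\<lambda>i::'n. axis i (1::real))"
    by (simp add: orthonormal_basis_def inner_axis_axis)
  ultimately show "cross_polytope_measure \<mu>"
    unfolding cross_polytope_measure_def emeasure_eq_measure using M by auto
qed

lemma I_Vs_le_I_Vs_2:
  assumes M: "sphere_prob (M :: (real^'n) measure)" and s: "2 \<le> s"
  shows "I_Vs s M \<le> I_Vs 2 M"
  unfolding I_Vs_eq_energy
proof (rule energy_mono[OF M M bounded_kernel_V_powr bounded_kernel_V_powr])
  fix x y :: "real^'n" assume "norm x = 1" "norm y = 1"
  then show "V x y powr s \<le> V x y powr 2"
    using V_unit_bounds[of x y] s by (intro powr_mono') auto
qed (use s in auto)

lemma maximizer_iff_I_Vs_eq: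
  assumes s: "2 \<le> s"
  shows "maximizer s (\<mu> :: (real^'n) measure) \<longleftrightarrow> sphere_prob \<mu> \<and> I_Vs s \<mu> = 1 - 1 / real CARD('n)"
proof -
  have le: "I_Vs s \<nu> \<le> 1 - 1 / real CARD('n)" if "sphere_prob (\<nu> :: (real^'n) measure)" for \<nu>
    using I_Vs_le_I_Vs_2[OF that s] I_Vs_2_eq_isotropy_defect[OF that] isotropy_defect_nonneg[of \<nu>]
    by linarith
  obtain \<kappa> :: "(real^'n) measure" where \<kappa>: "cross_polytope_measure \<kappa>"
    using cross_polytope_measure_exists by blast
  then have "sphere_prob \<kappa>" "I_Vs s \<kappa> = 1 - 1 / real CARD('n)"
    using I_Vs_cross_polytope[OF \<kappa>] s by (simp_all add: cross_polytope_measure_def)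
  then show ?thesis
    unfolding maximizer_def using le by (metis order_antisym)
qed

lemma inner_square_01_of_V_powr_eq:
  fixes x y :: "real^'n"
  assumes xy: "norm x = 1" "norm y = 1" and s: "2 < s" and eq: "V x y powr 2 = V x y powr s"
  shows "(x \<bullet> y)\<^sup>2 = 0 \<or> (x \<bullet> y)\<^sup>2 = 1"
proof -
  have "\<not> (0 < V x y \<and> V x y < 1)"
    using eq s powr_less_mono'[of "V x y" 2 s] by auto
  then have "V x y = 0 \<or> V x y = 1" using V_unit_bounds[OF xy] by auto
  then show ?thesis using inner_square_unit_bounds[OF xy] by (auto simp: V_def)
qed

lemma AE_inner_square_01:
  assumes M: "sphere_prob (M :: (real^'n) measure)" and s: "2 < s" and eq: "I_Vs s M = I_Vs 2 M"
  shows "AE x in M. norm x = 1 \<and> (AE y in M. (x \<bullet> y)\<^sup>2 = 0 \<or> (x \<bullet> y)\<^sup>2 = 1)"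
proof -
  let ?K = "\<lambda>x y :: real^'n. V x y powr 2 + (- 1) * V x y powr s"
  have V2: "bounded_kernel (\<lambda>x y :: real^'n. V x y powr 2)" and Vs: "bounded_kernel (\<lambda>x y :: real^'n. V x y powr s)"
    using s by (simp_all add: bounded_kernel_V_powr)
  have K: "bounded_kernel ?K"
    by (intro bounded_kernel_add bounded_kernel_cmult V2 Vs)
  have "energy M M ?K = I_Vs 2 M - I_Vs s M"
    unfolding energy_add[OF M M V2 bounded_kernel_cmult[OF Vs]] energy_cmult I_Vs_eq_energy by simp
  then have "energy M M ?K = 0" using eq by simp
  moreover have "0 \<le> ?K x y" if "norm x = 1" "norm y = 1" for x y :: "real^'n"
  proof -
    have "V x y powr s \<le> V x y powr 2" using V_unit_bounds[OF that] s by (intro powr_mono') auto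
    then show ?thesis by simp
  qed
  ultimately have "AE x in M. norm x = 1 \<and> (AE y in M. ?K x y = 0)"
    by (intro energy_eq_0_imp_AE[OF M K])
  then show ?thesis
  proof eventually_elim
    case (elim x)
    then have x: "norm x = 1" and "AE y in M. ?K x y = 0" by simp_all
    from this(2) AE_norm_sphere_prob[OF M]
    have "AE y in M. (x \<bullet> y)\<^sup>2 = 0 \<or> (x \<bullet> y)\<^sup>2 = 1"
    proof eventually_elim
      case (elim y)
      then show ?case by (intro inner_square_01_of_V_powr_eq[OF x _ s]) simp_all
    qed
    with x show ?case by simp
  qed
qed

lemma integral_inner_square_isotropic:
  assumes M: "sphere_prob (M :: (real^'n) measure)" and iso: "isotropic M"
  shows "(\<integral>y. (x \<bullet> y)\<^sup>2 \<partial>M) = (norm x)\<^sup>2 / real CARD('n)"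
proof -
  have "(\<integral>y. (x \<bullet> y)\<^sup>2 \<partial>M) = (\<Sum>i\<in>UNIV. (x $ i * x $ i) / real CARD('n))"
    using iso unfolding integral_inner_square[OF M] isotropic_iff_second_moment[OF M]
    by (simp add: if_distrib[of "(*) _"] sum.If_cases cong: if_cong)
  also have "\<dots> = (norm x)\<^sup>2 / real CARD('n)"
    by (simp add: power2_norm_eq_inner inner_vec_def sum_divide_distrib)
  finally show ?thesis .
qed

lemma AE_atom:
  assumes "AE y in M. Q y" and "z \<in> space M" and "emeasure M {z} \<noteq> 0"
  shows "Q z"
proof (rule ccontr)
  assume "\<not> Q z"
  from assms(1) obtain N where "{y \<in> space M. \<not> Q y} \<subseteq> N" "emeasure M N = 0" "N \<in> sets M"
    by (rule AE_E)
  with \<open>\<not> Q z\<close> assms(2,3) show False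
    using emeasure_mono[of "{z}" N M] by auto
qed

lemma (in prob_space) finite_disjoint_equal_prob:
  assumes L: "L \<subseteq> events" "disjoint L" and n: "0 < n" and prob: "\<And>A. A \<in> L \<Longrightarrow> prob A = 1 / real n"
  shows "finite L" and "prob (\<Union>L) = card L / real n"
proof -
  have union: "prob (\<Union>L') = card L' / real n" if "finite L'" "L' \<subseteq> L" for L'
  proof -
    have "disjoint_family_on (\<lambda>A. A) L'"
      using L(2) that(2) unfolding disjoint_family_on_def pairwise_def disjnt_def by blast
    then have "prob (\<Union>A\<in>L'. A) = (\<Sum>A\<in>L'. prob A)"
      using that L by (intro finite_measure_finite_Union[of L' "\<lambda>A. A"]) auto
    also have "\<dots> = (\<Sum>A\<in>L'. 1 / real n)"
      using that prob by (intro sum.cong) auto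
    finally show ?thesis by simp
  qed
  show "finite L"
  proof (rule ccontr)
    assume "infinite L"
    then obtain L' where "finite L'" "card L' = Suc n" "L' \<subseteq> L"
      using infinite_arbitrarily_large by blast
    then have "real (Suc n) / real n \<le> 1" using union[of L'] by (metis prob_le_1)
    then show False using n by (simp add: field_simps)
  qed
  then show "prob (\<Union>L) = card L / real n" by (rule union) simp
qed

lemma pair_eq_of_common_point:
  fixes x y z :: "'a :: ab_group_add"
  assumes "z \<in> {x, - x}" and "z \<in> {y, - y}"
  shows "{x, - x} = {y, - y}"
  using assms by (auto simp: minus_equation_iff)

lemma disjoint_antipodal_pairs: "disjoint ((\<lambda>x :: 'a :: ab_group_add. {x, - x}) ` S)"
proof (rule pairwiseI)
  fix A B assume "A \<in> (\<lambda>x. {x, - x}) ` S" "B \<in> (\<lambda>x. {x, - x}) ` S" "A \<noteq> B"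
  then obtain x y where A: "A = {x, - x}" and B: "B = {y, - y}" by auto
  show "disjnt A B"
    unfolding disjnt_def
  proof (rule ccontr)
    assume "A \<inter> B \<noteq> {}"
    then obtain z where "z \<in> A" "z \<in> B" by blast
    then have "A = B" unfolding A B by (rule pair_eq_of_common_point)
    with \<open>A \<noteq> B\<close> show False ..
  qed
qed

lemma inner_eq_0_of_atoms:
  fixes x x' :: "real^'n"
  assumes M: "sphere_prob M"
    and x: "norm x = 1" "AE y in M. (x \<bullet> y)\<^sup>2 = 0 \<or> (x \<bullet> y)\<^sup>2 = 1"
    and x': "norm x' = 1" "measure M {x', - x'} \<noteq> 0"
    and ne: "{x, - x} \<noteq> {x', - x'}"
  shows "x \<bullet> x' = 0"
proof -
  interpret prob_space M by (rule prob_space_sphere_prob[OF M])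
  have space: "space M = UNIV" using sets_eq_imp_space_eq[OF sets_sphere_prob[OF M]] by simp
  have "prob ({x'} \<union> {- x'}) \<le> prob {x'} + prob {- x'}"
    by (rule measure_subadditive) (simp_all add: sets_sphere_prob[OF M])
  then have "prob {x', - x'} \<le> prob {x'} + prob {- x'}"
    by (simp add: insert_commute)
  then have "prob {x'} \<noteq> 0 \<or> prob {- x'} \<noteq> 0"
    using x'(2) measure_nonneg[of M "{x', - x'}"] by linarith
  then obtain z where z: "z \<in> {x', - x'}" "prob {z} \<noteq> 0"
    by blast
  have "norm z = 1" using z(1) x'(1) by auto
  have "(x \<bullet> z)\<^sup>2 = 0 \<or> (x \<bullet> z)\<^sup>2 = 1"
    using z(2) by (intro AE_atom[OF x(2)]) (simp_all add: space emeasure_eq_measure)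
  moreover have "(x \<bullet> z)\<^sup>2 \<noteq> 1"
  proof
    assume "(x \<bullet> z)\<^sup>2 = 1"
    then have "z \<in> {x, - x}" using inner_square_eq_1_iff[OF x(1) \<open>norm z = 1\<close>] by auto
    then show False using ne pair_eq_of_common_point[OF _ z(1)] by simp
  qed
  ultimately show ?thesis using z(1) by auto
qed

lemma antipodal_pairs_cover:
  fixes M :: "(real^'n) measure"
  assumes M: "sphere_prob M" and AE: "AE x in M. x \<in> S"
    and S: "\<And>x. x \<in> S \<Longrightarrow> measure M {x, - x} = 1 / real CARD('n)"
  defines "L \<equiv> (\<lambda>x. {x, - x}) ` S"
  shows "finite L" "card L = CARD('n)" "measure M (\<Union>L) = 1"
proof -
  interpret prob_space M by (rule prob_space_sphere_prob[OF M])
  have events: "A \<in> events" if "finite A" for A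
    using that by (simp add: sets_sphere_prob[OF M] finite_imp_closed borel_closed)
  have sub: "L \<subseteq> events" using events by (auto simp: L_def)
  have disj: "disjoint L" unfolding L_def by (rule disjoint_antipodal_pairs)
  have eq: "prob A = 1 / real CARD('n)" if "A \<in> L" for A
    using that S by (auto simp: L_def)
  show finite: "finite L"
    using finite_disjoint_equal_prob(1)[OF sub disj _ eq] by simp
  have prob_L: "prob (\<Union>L) = card L / real CARD('n)"
    using finite_disjoint_equal_prob(2)[OF sub disj _ eq] by simp
  have "\<Union>L \<in> events" using finite by (intro events) (auto simp: L_def)
  moreover have "AE x in M. x \<in> \<Union>L" using AE by eventually_elim (auto simp: L_def)
  ultimately show "prob (\<Union>L) = 1" by (rule iffD1[OF AE_in_set_eq_1])
  then show "card L = CARD('n)" using prob_L by simp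
qed

lemma cross_polytope_measure_of_lines:
  fixes M :: "(real^'n) measure"
  assumes M: "sphere_prob M" and AE: "AE x in M. x \<in> S"
    and S: "\<And>x. x \<in> S \<Longrightarrow> norm x = 1 \<and> measure M {x, - x} = 1 / real CARD('n) \<and>
                          (AE y in M. (x \<bullet> y)\<^sup>2 = 0 \<or> (x \<bullet> y)\<^sup>2 = 1)"
  shows "cross_polytope_measure M"
proof -
  interpret prob_space M by (rule prob_space_sphere_prob[OF M])
  define L where "L = (\<lambda>x. {x, - x}) ` S"
  have finite: "finite L" and "card L = CARD('n)" and "measure M (\<Union>L) = 1"
    using antipodal_pairs_cover[OF M AE] S unfolding L_def by auto
  then obtain h :: "'n \<Rightarrow> (real^'n) set" where h: "bij_betw h UNIV L"
    using finite finite_same_card_bij[of "UNIV :: 'n set" L] by auto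
  have "\<forall>A\<in>L. \<exists>x. x \<in> S \<and> A = {x, - x}" by (auto simp: L_def)
  from bchoice[OF this] obtain r where r: "\<forall>A\<in>L. r A \<in> S \<and> A = {r A, - r A}"
    by blast
  define e where "e i = r (h i)" for i
  have hL: "h i \<in> L" for i using h by (auto simp: bij_betw_def)
  have eS: "e i \<in> S" and pair: "{e i, - e i} = h i" for i
    using r hL by (simp_all add: e_def)
  have "orthonormal_basis e"
    unfolding orthonormal_basis_def
  proof (intro allI)
    fix i j
    show "e i \<bullet> e j = (if i = j then 1 else 0)"
    proof (cases "i = j")
      case True then show ?thesis using S[OF eS] by (simp add: norm_eq_1)
    next
      case False
      then have "{e i, - e i} \<noteq> {e j, - e j}"
        using h unfolding pair by (auto simp: bij_betw_def inj_on_def)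
      moreover have "norm (e i) = 1" "AE y in M. (e i \<bullet> y)\<^sup>2 = 0 \<or> (e i \<bullet> y)\<^sup>2 = 1"
        using S[OF eS[of i]] by simp_all
      moreover have "norm (e j) = 1" "measure M {e j, - e j} \<noteq> 0"
        using S[OF eS[of j]] by simp_all
      ultimately have "e i \<bullet> e j = 0"
        by (intro inner_eq_0_of_atoms[OF M])
      then show ?thesis using False by simp
    qed
  qed
  moreover have "(\<Union>i. {e i, - e i}) = \<Union>L"
    using h unfolding pair by (simp add: bij_betw_def)
  then have "emeasure M (\<Union>i. {e i, - e i}) = 1"
    using \<open>measure M (\<Union>L) = 1\<close> by (simp add: emeasure_eq_measure)
  moreover have "measure M {e i, - e i} = 1 / real CARD('n)" for i
    using S[OF eS] by simp
  ultimately show ?thesis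
    unfolding cross_polytope_measure_def using M by blast
qed

lemma maximizer_iff_cross_polytope_measure:
  assumes s: "2 < s"
  shows "maximizer s (\<mu> :: (real^'n) measure) \<longleftrightarrow> cross_polytope_measure \<mu>"
proof
  assume "maximizer s \<mu>"
  then have M: "sphere_prob \<mu>" and max: "I_Vs s \<mu> = 1 - 1 / real CARD('n)"
    using maximizer_iff_I_Vs_eq[of s \<mu>] s by auto
  have "I_Vs s \<mu> \<le> I_Vs 2 \<mu>" using I_Vs_le_I_Vs_2[OF M] s by simp
  then have "isotropy_defect \<mu> = 0" and eq: "I_Vs s \<mu> = I_Vs 2 \<mu>"
    using max I_Vs_2_eq_isotropy_defect[OF M] isotropy_defect_nonneg[of \<mu>] by linarith+
  then have iso: "isotropic \<mu>" using isotropy_defect_eq_0_iff[OF M] by simp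
  let ?S = "{x. norm x = 1 \<and> (AE y in \<mu>. (x \<bullet> y)\<^sup>2 = 0 \<or> (x \<bullet> y)\<^sup>2 = 1)}"
  show "cross_polytope_measure \<mu>"
  proof (rule cross_polytope_measure_of_lines[OF M, of ?S])
    show "AE x in \<mu>. x \<in> ?S" using AE_inner_square_01[OF M s eq] by simp
    fix x assume "x \<in> ?S"
    then have x: "norm x = 1" and AE: "AE y in \<mu>. (x \<bullet> y)\<^sup>2 = 0 \<or> (x \<bullet> y)\<^sup>2 = 1"
      by simp_all
    have "measure \<mu> {x, - x} = (\<integral>y. (x \<bullet> y)\<^sup>2 \<partial>\<mu>)"
      by (rule integral_inner_square_eq_measure[OF M x AE, symmetric])
    also have "\<dots> = 1 / real CARD('n)"
      by (simp add: integral_inner_square_isotropic[OF M iso] x)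
    finally show "norm x = 1 \<and> measure \<mu> {x, - x} = 1 / real CARD('n) \<and>
        (AE y in \<mu>. (x \<bullet> y)\<^sup>2 = 0 \<or> (x \<bullet> y)\<^sup>2 = 1)"
      using x AE by blast
  qed
next
  assume "cross_polytope_measure \<mu>"
  then show "maximizer s \<mu>"
    using maximizer_iff_I_Vs_eq[of s \<mu>] I_Vs_cross_polytope[of \<mu> s] s
    by (simp add: cross_polytope_measure_def)
qed

lemma maximizer_sigma_sphere:
  assumes "0 < s" "s < 2"
  shows "maximizer s (sigma_sphere :: (real^'n) measure)"
  unfolding maximizer_def using sphere_prob_sigma_sphere I_Vs_le_sigma_sphere[OF assms] by blast

lemma maximizer_2_iff_isotropic:
  assumes M: "sphere_prob (\<mu> :: (real^'n) measure)"
  shows "maximizer 2 \<mu> \<longleftrightarrow> isotropic \<mu>"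
proof -
  have "maximizer 2 \<mu> \<longleftrightarrow> isotropy_defect \<mu> = 0"
    using maximizer_iff_I_Vs_eq[of 2 \<mu>] I_Vs_2_eq_isotropy_defect[OF M] M by simp
  then show ?thesis using isotropy_defect_eq_0_iff[OF M] by simp
qed

theorem proposition2p12:
  fixes s :: real and \<mu> :: "(real^'n) measure"
  shows "(0 < s \<and> s < 2 \<longrightarrow> maximizer s (sigma_sphere :: (real^'n) measure))
       \<and> (s = 2 \<longrightarrow> sphere_prob \<mu> \<longrightarrow> (maximizer s \<mu> \<longleftrightarrow> isotropic \<mu>))
       \<and> (2 < s \<longrightarrow> (maximizer s \<mu> \<longleftrightarrow>
            sphere_prob \<mu> \<and>
            (\<exists>e. orthonormal_basis e \<and>
                 emeasure \<mu> (\<Union>i. {e i, - e i}) = 1 \<and>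
                 (\<forall>i. measure \<mu> {e i, - e i} = 1 / real CARD('n)))))"
  using maximizer_sigma_sphere[of s] maximizer_2_iff_isotropic[of \<mu>]
    maximizer_iff_cross_polytope_measure[of s \<mu>]
  unfolding cross_polytope_measure_def by blast

end
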